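(* Under Assumptions A1–A4, let $n_1<n_2$ be two consecutive switch points of the core Two-Tailed Averaging algorithm. Then there exists an evaluation step $n\in[n_1,n_2-E]$ such that $L(n)=\mathcal{O}^E(n)$ or $L(n)=\mathcal{O}_E(n)$.
   Context: Let $\Theta=\mathbb{R}^d$, let $(\theta_t)_{t\in\mathbb{N}_0}$ be a sequence in $\Theta$, let $f\colon\Theta\to\mathbb{R}$ be a loss function, and let $E\in\mathbb{N}$ be the evaluation period. Evaluation steps are the multiples of $E$. For integers $t\ge \Delta\ge 1$ write $\mathrm{avg}(t,\Delta)=\frac{1}{\Delta}\sum_{i=t+1-\Delta}^{t}\theta_i$; set $f(\mathrm{avg}(t,0))=+\infty$. Core Two-Tailed Averaging: it maintains integers $S,L$ and vectors $\theta^S,\theta^L$, initially $S=L=0$, $\theta^S=\theta^L=0$. For $t=1,2,\dots$: first $\theta_t$ is added to both averages, i.e. $\theta^S\leftarrow\theta^S+(\theta_t-\theta^S)/(S+1)$, $S\leftarrow S+1$, and $\theta^L\leftarrow\theta^L+(\theta_t-\theta^L)/(L+1)$, $L\leftarrow L+1$ (so $\theta^S=\mathrm{avg}(t,S)$, $\theta^L=\mathrm{avg}(t,L)$). Then, if $E$ divides $t$: if $f(\theta^S)\le f(\theta^L)$, a switch is performed: $L\leftarrow S$, $\theta^L\leftarrow\theta^S$, $S\leftarrow 0$. $S(t),L(t)$ denote the values after the $t$-th pass through the loop. A time step $n$ is a switch point if a switch is performed at $t=n$; two switch points are consecutive if no switch point lies strictly between them. Optimal length: for $t\ge1$, $\mathcal{O}(t)$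 is a (fixed) minimizer of $\Delta\mapsto f(\mathrm{avg}(t,\Delta))$ over $\Delta\in\{1,\dots,t\}$; $\mathcal{O}_E(n)=\lfloor \mathcal{O}(n)/E\rfloor E$ and $\mathcal{O}^E(n)=\lceil \mathcal{O}(n)/E\rceil E$. Assumptions (for all evaluation steps $n\ge E$): A1: $\Delta\mapsto f(\mathrm{avg}(n,\Delta))$ is strictly decreasing on $\Delta\in\{0,E,2E,\dots,\mathcal{O}_E(n)\}$. A2: for every integer $n_+$ with $\mathcal{O}^E(n)\le n_+\le n$, $f(\mathrm{avg}(n,\mathcal{O}^E(n)))\le f(\mathrm{avg}(n,n_+))$. A3: there exists a positive multiple $n_s$ of $E$ with $\mathcal{O}(n+n_s)-\mathcal{O}(n)<n_s$. A4: $\mathcal{O}(n)\le\mathcal{O}(n+E)$. *)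

theory Defs
  imports "HOL-Analysis.Analysis" "HOL-Library.Extended_Real"
begin

definition avg :: "(nat \<Rightarrow> real ^ 'd) \<Rightarrow> nat \<Rightarrow> nat \<Rightarrow> real ^ 'd" where
  "avg \<theta> t \<Delta> = (1 / real \<Delta>) *\<^sub>R (\<Sum>i\<in>{t + 1 - \<Delta>..t}. \<theta> i)"

definition favg :: "(real ^ 'd \<Rightarrow> real) \<Rightarrow> (nat \<Rightarrow> real ^ 'd) \<Rightarrow> nat \<Rightarrow> nat \<Rightarrow> ereal" where
  "favg f \<theta> t \<Delta> = (if \<Delta> = 0 then \<infinity> else ereal (f (avg \<theta> t \<Delta>)))"

definition tta_add :: "real ^ 'd \<Rightarrow> nat \<times> nat \<times> (real ^ 'd) \<times> (real ^ 'd) \<Rightarrow> nat \<times> nat \<times> (real ^ 'd) \<times> (real ^ 'd)" where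
  "tta_add x st = (case st of (S, L, aS, aL) \<Rightarrow>
      (S + 1, L + 1, aS + (1 / real (S + 1)) *\<^sub>R (x - aS), aL + (1 / real (L + 1)) *\<^sub>R (x - aL)))"

definition tta_switch_cond :: "(real ^ 'd \<Rightarrow> real) \<Rightarrow> nat \<Rightarrow> nat \<Rightarrow> nat \<times> nat \<times> (real ^ 'd) \<times> (real ^ 'd) \<Rightarrow> bool" where
  "tta_switch_cond f E t st = (case st of (S, L, aS, aL) \<Rightarrow> E dvd t \<and> f aS \<le> f aL)"

fun tta :: "(real ^ 'd \<Rightarrow> real) \<Rightarrow> nat \<Rightarrow> (nat \<Rightarrow> real ^ 'd) \<Rightarrow> nat \<Rightarrow> nat \<times> nat \<times> (real ^ 'd) \<times> (real ^ 'd)" where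
  "tta f E \<theta> 0 = (0, 0, 0, 0)"
| "tta f E \<theta> (Suc t) =
     (let st = tta_add (\<theta> (Suc t)) (tta f E \<theta> t) in
      if tta_switch_cond f E (Suc t) st
      then (case st of (S, L, aS, aL) \<Rightarrow> (0, S, aS, aS))
      else st)"

definition tta_L :: "(real ^ 'd \<Rightarrow> real) \<Rightarrow> nat \<Rightarrow> (nat \<Rightarrow> real ^ 'd) \<Rightarrow> nat \<Rightarrow> nat" where
  "tta_L f E \<theta> t = fst (snd (tta f E \<theta> t))"

definition switch_point :: "(real ^ 'd \<Rightarrow> real) \<Rightarrow> nat \<Rightarrow> (nat \<Rightarrow> real ^ 'd) \<Rightarrow> nat \<Rightarrow> bool" where
  "switch_point f E \<theta> n \<longleftrightarrow> n \<ge> 1 \<and>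
     tta_switch_cond f E n (tta_add (\<theta> n) (tta f E \<theta> (n - 1)))"

definition OE_floor :: "(nat \<Rightarrow> nat) \<Rightarrow> nat \<Rightarrow> nat \<Rightarrow> nat" where
  "OE_floor Opt E n = (Opt n div E) * E"

definition OE_ceil :: "(nat \<Rightarrow> nat) \<Rightarrow> nat \<Rightarrow> nat \<Rightarrow> nat" where
  "OE_ceil Opt E n = ((Opt n + E - 1) div E) * E"

end

theory Submission
  imports Defs
begin

(* Just before each check the short tail is at most O^E: were it equal to O^E, assumption A2 would
   make it no worse than the long tail and force a switch, which resets it; A4 carries the bound
   from one evaluation step to the next. So right after the switch at n1 the long tail is at most
   O^E(n1). Until the next switch it grows by exactly E per evaluation period while O_E does not
   decrease (A4). If it never met O^E or O_E it would therefore stay at least one period below O_E,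
   and at n2 both candidate lengths S + E < L + E would lie in the range where A1 makes
   f (avg n2 _) strictly decreasing: the long tail would be strictly better and no switch could
   happen at n2. *)

lemma avg_Suc:
  assumes "S \<le> t" "0 < S \<longrightarrow> a = avg \<theta> t S"
  shows "a + (1 / real (Suc S)) *\<^sub>R (\<theta> (Suc t) - a) = avg \<theta> (Suc t) (Suc S)"
proof (cases "S = 0")
  case True
  then show ?thesis by (simp add: avg_def)
next
  case False
  then have a: "a = avg \<theta> t S" and S: "real S > 0" using assms by auto
  have "(\<Sum>i\<in>{Suc t + 1 - Suc S..Suc t}. \<theta> i) = (\<Sum>i\<in>{t + 1 - S..t}. \<theta> i) + \<theta> (Suc t)"
    using assms(1) by (simp add: sum.cl_ivl_Suc)
  also have "(\<Sum>i\<in>{t + 1 - S..t}. \<theta> i) = real S *\<^sub>R a"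
    using S by (simp add: a avg_def)
  finally have "avg \<theta> (Suc t) (Suc S) = (1 / real (Suc S)) *\<^sub>R (real S *\<^sub>R a + \<theta> (Suc t))"
    by (simp add: avg_def)
  also have "\<dots> = a + (1 / real (Suc S)) *\<^sub>R (\<theta> (Suc t) - a)"
    by (simp add: algebra_simps scaleR_diff_right flip: scaleR_add_left) (simp add: field_simps)
  finally show ?thesis ..
qed

lemma tta_invariant:
  "case tta f E \<theta> t of (S, L, aS, aL) \<Rightarrow>
     S \<le> L \<and> L \<le> t \<and> (0 < t \<longrightarrow> 0 < L) \<and> E dvd (t - S) \<and> E dvd (t - L) \<and>
     (0 < S \<longrightarrow> aS = avg \<theta> t S) \<and> (0 < L \<longrightarrow> aL = avg \<theta> t L)"
proof (induction t)
  case 0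
  then show ?case by simp
next
  case (Suc t)
  obtain S L aS aL where st: "tta f E \<theta> t = (S, L, aS, aL)"
    by (cases "tta f E \<theta> t") auto
  with Suc.IH have "S \<le> L" "L \<le> t" "E dvd (t - S)" "E dvd (t - L)"
    and "0 < S \<longrightarrow> aS = avg \<theta> t S" "0 < L \<longrightarrow> aL = avg \<theta> t L"
    by auto
  with avg_Suc[of S t aS \<theta>] avg_Suc[of L t aL \<theta>] show ?case
    by (auto simp: st tta_add_def tta_switch_cond_def Let_def)
qed

definition tta_S :: "(real ^ 'd \<Rightarrow> real) \<Rightarrow> nat \<Rightarrow> (nat \<Rightarrow> real ^ 'd) \<Rightarrow> nat \<Rightarrow> nat" where
  "tta_S f E \<theta> t = fst (tta f E \<theta> t)"

lemma tta_S_le_L: "tta_S f E \<theta> t \<le> tta_L f E \<theta> t"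
  and tta_L_le: "tta_L f E \<theta> t \<le> t"
  and tta_L_pos: "0 < t \<Longrightarrow> 0 < tta_L f E \<theta> t"
  and dvd_diff_tta_S: "E dvd (t - tta_S f E \<theta> t)"
  and dvd_diff_tta_L: "E dvd (t - tta_L f E \<theta> t)"
  using tta_invariant[where f=f and E=E and \<theta>=\<theta> and t=t]
  by (auto simp: tta_S_def tta_L_def split: prod.splits)

lemma tta_add_tta:
  "tta_add (\<theta> (Suc t)) (tta f E \<theta> t) =
     (Suc (tta_S f E \<theta> t), Suc (tta_L f E \<theta> t),
      avg \<theta> (Suc t) (Suc (tta_S f E \<theta> t)), avg \<theta> (Suc t) (Suc (tta_L f E \<theta> t)))"
  using tta_invariant[where f=f and E=E and \<theta>=\<theta> and t=t]
    avg_Suc[of "tta_S f E \<theta> t" t _ \<theta>] avg_Suc[of "tta_L f E \<theta> t" t _ \<theta>]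
  by (auto simp: tta_add_def tta_S_def tta_L_def split: prod.splits)

lemma switch_point_Suc_iff:
  "switch_point f E \<theta> (Suc t) \<longleftrightarrow> E dvd Suc t \<and>
     f (avg \<theta> (Suc t) (Suc (tta_S f E \<theta> t))) \<le> f (avg \<theta> (Suc t) (Suc (tta_L f E \<theta> t)))"
  by (simp add: switch_point_def tta_add_tta tta_switch_cond_def)

lemma tta_S_Suc:
  "tta_S f E \<theta> (Suc t) = (if switch_point f E \<theta> (Suc t) then 0 else Suc (tta_S f E \<theta> t))"
  and tta_L_Suc:
  "tta_L f E \<theta> (Suc t) =
     Suc (if switch_point f E \<theta> (Suc t) then tta_S f E \<theta> t else tta_L f E \<theta> t)"
  by (simp_all add: switch_point_def tta_add_tta tta_S_def tta_L_def Let_def)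

lemma tta_S_switch_point: "switch_point f E \<theta> n \<Longrightarrow> tta_S f E \<theta> n = 0"
  using tta_S_Suc[of f E \<theta> "n - 1"] by (simp add: switch_point_def)

lemma switch_point_dvd: "switch_point f E \<theta> n \<Longrightarrow> E dvd n"
  by (auto simp: switch_point_def tta_switch_cond_def split: prod.splits)

lemma switch_point_pos: "switch_point f E \<theta> n \<Longrightarrow> 0 < n"
  by (simp add: switch_point_def)

lemma tta_no_switch_shift:
  assumes "\<And>j. a < j \<Longrightarrow> j \<le> a + m \<Longrightarrow> \<not> switch_point f E \<theta> j"
  shows "tta_S f E \<theta> (a + m) = tta_S f E \<theta> a + m \<and> tta_L f E \<theta> (a + m) = tta_L f E \<theta> a + m"
  using assms by (induction m) (simp_all add: tta_S_Suc tta_L_Suc)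

lemma dvd_tta_S: "E dvd t \<Longrightarrow> E dvd tta_S f E \<theta> t"
  using dvd_diff_nat[OF _ dvd_diff_tta_S] tta_S_le_L tta_L_le
  by (metis diff_diff_cancel le_trans)

lemma dvd_tta_L: "E dvd t \<Longrightarrow> E dvd tta_L f E \<theta> t"
  using dvd_diff_nat[OF _ dvd_diff_tta_L] tta_L_le by (metis diff_diff_cancel)

lemma tta_within_period:
  assumes "E dvd a" "j < E"
  shows "tta_S f E \<theta> (a + j) = tta_S f E \<theta> a + j \<and> tta_L f E \<theta> (a + j) = tta_L f E \<theta> a + j"
proof (rule tta_no_switch_shift)
  fix i assume "a < i" "i \<le> a + j"
  then have "0 < i - a" "i - a < E" using assms(2) by auto
  then have "\<not> E dvd (i - a)" using nat_dvd_not_less by blast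
  then show "\<not> switch_point f E \<theta> i"
    using assms(1) switch_point_dvd dvd_diff_nat by blast
qed

context
  fixes f :: "real ^ 'd \<Rightarrow> real" and E :: nat and \<theta> :: "nat \<Rightarrow> real ^ 'd" and a :: nat
  assumes E_pos: "0 < E" and a_dvd: "E dvd a"
begin

private lemma last_in_period:
  "Suc (a + (E - 1)) = a + E"
  "Suc (tta_S f E \<theta> (a + (E - 1))) = tta_S f E \<theta> a + E"
  "Suc (tta_L f E \<theta> (a + (E - 1))) = tta_L f E \<theta> a + E"
  using E_pos tta_within_period[OF a_dvd, of "E - 1" f \<theta>] by auto

lemma switch_point_next_eval_iff:
  "switch_point f E \<theta> (a + E) \<longleftrightarrow>
     f (avg \<theta> (a + E) (tta_S f E \<theta> a + E)) \<le> f (avg \<theta> (a + E) (tta_L f E \<theta> a + E))"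
  using switch_point_Suc_iff[of f E \<theta> "a + (E - 1)"] a_dvd by (simp only: last_in_period) simp

lemma tta_S_next_eval:
  "tta_S f E \<theta> (a + E) = (if switch_point f E \<theta> (a + E) then 0 else tta_S f E \<theta> a + E)"
  using tta_S_Suc[of f E \<theta> "a + (E - 1)"] by (simp only: last_in_period)

lemma tta_L_next_eval:
  "tta_L f E \<theta> (a + E) =
     (if switch_point f E \<theta> (a + E) then tta_S f E \<theta> a else tta_L f E \<theta> a) + E"
  using tta_L_Suc[of f E \<theta> "a + (E - 1)"] by (simp only: last_in_period if_distrib) simp

end

lemma multiple_add_le_of_less:
  fixes E x y :: nat
  assumes "E dvd x" "E dvd y" "x < y"
  shows "x + E \<le> y"
proof -
  have "E dvd (y - x)" using assms dvd_diff_nat by blast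
  then have "E \<le> y - x" using assms(3) by (simp add: dvd_imp_le)
  then show ?thesis using assms(3) by simp
qed

lemma dvd_OE_floor: "E dvd OE_floor Opt E n"
  by (simp add: OE_floor_def)

lemma dvd_OE_ceil: "E dvd OE_ceil Opt E n"
  by (simp add: OE_ceil_def)

lemma OE_floor_le_OE_ceil: "OE_floor Opt E n \<le> OE_ceil Opt E n"
  unfolding OE_floor_def OE_ceil_def
  by (cases "E = 0") (simp_all add: div_le_mono)

lemma OE_ceil_le_OE_floor_add: "OE_ceil Opt E n \<le> OE_floor Opt E n + E"
proof (cases "E = 0")
  case False
  have "(Opt n + E - 1) div E \<le> (Opt n + E) div E" by (simp add: div_le_mono)
  also have "\<dots> = Opt n div E + 1" using False by simp
  finally show ?thesis
    unfolding OE_floor_def OE_ceil_def by (metis add_mult_distrib mult_1 mult_le_mono1)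
qed (simp add: OE_ceil_def)

lemma OE_ceil_ge:
  assumes "0 < E" "0 < Opt n"
  shows "E \<le> OE_ceil Opt E n"
proof -
  have "E div E \<le> (Opt n + E - 1) div E"
    using assms by (intro div_le_mono) simp
  then show ?thesis
    using assms(1) unfolding OE_ceil_def by (metis div_self less_not_refl mult_1 mult_le_mono1)
qed

lemma OE_floor_mono: "Opt n \<le> Opt m \<Longrightarrow> OE_floor Opt E n \<le> OE_floor Opt E m"
  by (simp add: OE_floor_def div_le_mono)

lemma OE_ceil_mono: "Opt n \<le> Opt m \<Longrightarrow> OE_ceil Opt E n \<le> OE_ceil Opt E m"
  by (simp add: OE_ceil_def div_le_mono)

lemma multiple_add_le_OE_floor:
  assumes "E dvd x" "x \<le> OE_ceil Opt E n" "x \<noteq> OE_ceil Opt E n" "x \<noteq> OE_floor Opt E n"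
  shows "x + E \<le> OE_floor Opt E n"
proof -
  have "x + E \<le> OE_ceil Opt E n"
    using assms multiple_add_le_of_less dvd_OE_ceil by simp
  then have "x < OE_floor Opt E n"
    using OE_ceil_le_OE_floor_add[of Opt E n] assms(4) by simp
  then show ?thesis using assms(1) multiple_add_le_of_less dvd_OE_floor by blast
qed

lemma favg_pos: "0 < \<Delta> \<Longrightarrow> favg f \<theta> n \<Delta> = ereal (f (avg \<theta> n \<Delta>))"
  by (simp add: favg_def)

locale tta_assumptions =
  fixes f :: "real ^ 'd \<Rightarrow> real" and E :: nat and \<theta> :: "nat \<Rightarrow> real ^ 'd"
    and Opt :: "nat \<Rightarrow> nat"
  assumes E_pos: "0 < E"
    and Opt_pos: "\<And>t. 1 \<le> t \<Longrightarrow> 0 < Opt t"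
    and A1: "\<And>n j k. E dvd n \<Longrightarrow> n \<ge> E \<Longrightarrow> j < k \<Longrightarrow> k * E \<le> OE_floor Opt E n \<Longrightarrow>
               favg f \<theta> n (k * E) < favg f \<theta> n (j * E)"
    and A2: "\<And>n np. E dvd n \<Longrightarrow> n \<ge> E \<Longrightarrow> OE_ceil Opt E n \<le> np \<Longrightarrow> np \<le> n \<Longrightarrow>
               favg f \<theta> n (OE_ceil Opt E n) \<le> favg f \<theta> n np"
    and A4: "\<And>n. E dvd n \<Longrightarrow> n \<ge> E \<Longrightarrow> Opt n \<le> Opt (n + E)"
begin

lemma tta_S_add_le_OE_ceil:
  assumes "E dvd a"
  shows "tta_S f E \<theta> a + E \<le> OE_ceil Opt E (a + E)"
proof -
  obtain k where "a = k * E" using \<open>E dvd a\<close> by (metis dvdE mult.commute)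
  moreover have "tta_S f E \<theta> (k * E) + E \<le> OE_ceil Opt E (k * E + E)"
  proof (induction k)
    case 0
    show ?case using OE_ceil_ge E_pos Opt_pos[of E] by (simp add: tta_S_def)
  next
    case (Suc k)
    define n where "n = k * E + E"
    have n: "E dvd n" "E \<le> n" by (simp_all add: n_def)
    have "tta_S f E \<theta> n + E \<le> OE_ceil Opt E n"
    proof (cases "switch_point f E \<theta> n")
      case True
      then show ?thesis
        using tta_S_next_eval[OF E_pos, of "k * E" f \<theta>] OE_ceil_ge[of E Opt n] Opt_pos[of n] n E_pos
        by (simp add: n_def)
    next
      case no_switch: False
      have S_n: "tta_S f E \<theta> n = tta_S f E \<theta> (k * E) + E"
        using tta_S_next_eval[OF E_pos, of "k * E" f \<theta>] no_switch by (simp add: n_def)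
      \<comment> \<open>reaching O^E would make the short tail win the comparison (A2) and force a switch\<close>
      have "tta_S f E \<theta> n \<noteq> OE_ceil Opt E n"
      proof
        assume S_opt: "tta_S f E \<theta> n = OE_ceil Opt E n"
        define l where "l = tta_L f E \<theta> (k * E) + E"
        have "OE_ceil Opt E n \<le> l" "l \<le> n"
          using S_opt S_n tta_S_le_L[of f E \<theta> "k * E"] tta_L_le[of f E \<theta> "k * E"]
          by (simp_all add: l_def n_def)
        then have "favg f \<theta> n (tta_S f E \<theta> n) \<le> favg f \<theta> n l"
          using A2[OF n] S_opt by simp
        then have "f (avg \<theta> n (tta_S f E \<theta> n)) \<le> f (avg \<theta> n l)"
          using E_pos by (simp add: favg_pos S_n l_def)
        then show False
          using no_switch switch_point_next_eval_iff[OF E_pos, of "k * E" f \<theta>] S_n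
          by (simp add: n_def l_def)
      qed
      moreover have "tta_S f E \<theta> n \<le> OE_ceil Opt E n"
        using Suc.IH S_n by (simp add: n_def)
      ultimately show ?thesis
        by (intro multiple_add_le_of_less dvd_tta_S n dvd_OE_ceil) simp
    qed
    also have "\<dots> \<le> OE_ceil Opt E (n + E)"
      using OE_ceil_mono A4[OF n] by blast
    finally show ?case by (simp add: n_def add.commute)
  qed
  ultimately show ?thesis by simp
qed

lemma tta_L_le_OE_ceil_at_switch_point:
  assumes sw: "switch_point f E \<theta> n"
  shows "tta_L f E \<theta> n \<le> OE_ceil Opt E n"
proof -
  have n: "E dvd n" "0 < n"
    using switch_point_dvd[OF sw] switch_point_pos[OF sw] by auto
  define a where "a = n - E"
  have "E \<le> n" using n by (blast intro: dvd_imp_le)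
  then have a: "E dvd a" "n = a + E"
    using n(1) unfolding a_def by (simp_all add: dvd_diff_nat)
  have "tta_L f E \<theta> n = tta_S f E \<theta> a + E"
    using tta_L_next_eval[OF E_pos a(1), of f \<theta>] sw unfolding a(2) by simp
  also have "\<dots> \<le> OE_ceil Opt E n"
    unfolding a(2) by (rule tta_S_add_le_OE_ceil[OF a(1)])
  finally show ?thesis .
qed

lemma tta_L_add_le_OE_floor:
  assumes n: "E dvd n" "E \<le> n"
    and L_le: "tta_L f E \<theta> n \<le> OE_ceil Opt E n"
    and no_switch: "\<And>j. n < j \<Longrightarrow> j \<le> n + k * E \<Longrightarrow> \<not> switch_point f E \<theta> j"
    and avoids: "\<And>i. i \<le> k \<Longrightarrow>
      tta_L f E \<theta> (n + i * E) \<notin> {OE_ceil Opt E (n + i * E), OE_floor Opt E (n + i * E)}"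
  shows "tta_L f E \<theta> (n + k * E) + E \<le> OE_floor Opt E (n + k * E)"
  using no_switch avoids
proof (induction k)
  case 0
  then show ?case
    using multiple_add_le_OE_floor dvd_tta_L[OF n(1)] L_le by fastforce
next
  case (Suc k)
  define m where "m = n + k * E"
  have m: "E dvd m" "E \<le> m" "n + Suc k * E = m + E" using n by (simp_all add: m_def)
  have "\<not> switch_point f E \<theta> (m + E)"
    using Suc.prems(1) E_pos by (simp add: m_def)
  then have L_next: "tta_L f E \<theta> (m + E) = tta_L f E \<theta> m + E"
    using tta_L_next_eval[OF E_pos m(1), of f \<theta>] by simp
  have "tta_L f E \<theta> m + E \<le> OE_floor Opt E m"
    using Suc by (simp add: m_def)
  also have "\<dots> \<le> OE_floor Opt E (m + E)"
    using OE_floor_mono A4[OF m(1,2)] by blast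
  also have "\<dots> \<le> OE_ceil Opt E (m + E)"
    by (rule OE_floor_le_OE_ceil)
  finally have "tta_L f E \<theta> (m + E) \<le> OE_ceil Opt E (m + E)"
    using L_next by simp
  moreover have "E dvd tta_L f E \<theta> (m + E)"
    using m(1) by (simp add: dvd_tta_L)
  ultimately show ?case
    using multiple_add_le_OE_floor Suc.prems(2)[of "Suc k"] unfolding m(3) by simp
qed

lemma not_switch_point_if_tta_L_add_le_OE_floor:
  assumes m: "E dvd m"
    and short_lt_long: "tta_S f E \<theta> m < tta_L f E \<theta> m"
    and long_le: "tta_L f E \<theta> m + E \<le> OE_floor Opt E (m + E)"
  shows "\<not> switch_point f E \<theta> (m + E)"
proof -
  obtain j' k' where "tta_S f E \<theta> m = j' * E" "tta_L f E \<theta> m = k' * E"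
    using dvd_tta_S[OF m] dvd_tta_L[OF m] by (metis dvdE mult.commute)
  then have j: "tta_S f E \<theta> m + E = Suc j' * E" and k: "tta_L f E \<theta> m + E = Suc k' * E"
    by simp_all
  have "Suc j' < Suc k'" using j k short_lt_long by simp
  moreover have "Suc k' * E \<le> OE_floor Opt E (m + E)" using long_le k by simp
  ultimately have "favg f \<theta> (m + E) (Suc k' * E) < favg f \<theta> (m + E) (Suc j' * E)"
    using m by (intro A1) simp_all
  then have "f (avg \<theta> (m + E) (Suc k' * E)) < f (avg \<theta> (m + E) (Suc j' * E))"
    using E_pos by (simp add: favg_pos)
  then show ?thesis
    using switch_point_next_eval_iff[OF E_pos m, of f \<theta>] unfolding j k by simp
qed

lemma tta_L_hits_OE_between_switch_points:
  assumes sw1: "switch_point f E \<theta> n1"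
    and sw2: "switch_point f E \<theta> (n1 + Suc K * E)"
    and no_switch: "\<And>j. n1 < j \<Longrightarrow> j \<le> n1 + K * E \<Longrightarrow> \<not> switch_point f E \<theta> j"
  shows "\<exists>i\<le>K. tta_L f E \<theta> (n1 + i * E) \<in> {OE_ceil Opt E (n1 + i * E), OE_floor Opt E (n1 + i * E)}"
proof (rule ccontr)
  assume "\<not> ?thesis"
  then have avoids: "\<And>i. i \<le> K \<Longrightarrow>
      tta_L f E \<theta> (n1 + i * E) \<notin> {OE_ceil Opt E (n1 + i * E), OE_floor Opt E (n1 + i * E)}"
    by blast
  have n1: "E dvd n1" "E \<le> n1"
    using switch_point_dvd[OF sw1] switch_point_pos[OF sw1] by (auto intro: dvd_imp_le)
  define m where "m = n1 + K * E"
  have m: "E dvd m" "E \<le> m" "n1 + Suc K * E = m + E" using n1 by (simp_all add: m_def)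
  have "tta_L f E \<theta> m + E \<le> OE_floor Opt E m"
    unfolding m_def
    by (rule tta_L_add_le_OE_floor[OF n1 tta_L_le_OE_ceil_at_switch_point[OF sw1] no_switch avoids])
  also have "\<dots> \<le> OE_floor Opt E (m + E)"
    by (rule OE_floor_mono[of Opt m "m + E", OF A4[OF m(1,2)]])
  finally have long_le: "tta_L f E \<theta> m + E \<le> OE_floor Opt E (m + E)" .
  have "tta_S f E \<theta> m = K * E" "tta_L f E \<theta> m = tta_L f E \<theta> n1 + K * E"
    using tta_no_switch_shift[OF no_switch] tta_S_switch_point[OF sw1] by (simp_all add: m_def)
  moreover have "0 < tta_L f E \<theta> n1"
    using n1(2) E_pos by (intro tta_L_pos) simp
  ultimately have "tta_S f E \<theta> m < tta_L f E \<theta> m" by simp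
  then have "\<not> switch_point f E \<theta> (m + E)"
    using not_switch_point_if_tta_L_add_le_OE_floor[OF m(1) _ long_le] by blast
  then show False using sw2 unfolding m(3) by simp
qed

end

theorem mainTheorem4:
  fixes \<theta> :: "nat \<Rightarrow> real ^ 'd" and f :: "real ^ 'd \<Rightarrow> real"
    and E :: nat and Opt :: "nat \<Rightarrow> nat" and n1 n2 :: nat
  assumes E_pos: "E \<ge> 1"
    and Opt_min: "\<And>t. t \<ge> 1 \<Longrightarrow> Opt t \<in> {1..t} \<and>
                   (\<forall>\<Delta>\<in>{1..t}. f (avg \<theta> t (Opt t)) \<le> f (avg \<theta> t \<Delta>))"
    and A1: "\<And>n j k. E dvd n \<Longrightarrow> n \<ge> E \<Longrightarrow> j < k \<Longrightarrow> k * E \<le> OE_floor Opt E n \<Longrightarrow>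
                favg f \<theta> n (k * E) < favg f \<theta> n (j * E)"
    and A2: "\<And>n np. E dvd n \<Longrightarrow> n \<ge> E \<Longrightarrow> OE_ceil Opt E n \<le> np \<Longrightarrow> np \<le> n \<Longrightarrow>
                favg f \<theta> n (OE_ceil Opt E n) \<le> favg f \<theta> n np"
    and A3: "\<And>n. E dvd n \<Longrightarrow> n \<ge> E \<Longrightarrow>
                \<exists>ns. ns > 0 \<and> E dvd ns \<and> int (Opt (n + ns)) - int (Opt n) < int ns"
    and A4: "\<And>n. E dvd n \<Longrightarrow> n \<ge> E \<Longrightarrow> Opt n \<le> Opt (n + E)"
    and sw1: "switch_point f E \<theta> n1"
    and sw2: "switch_point f E \<theta> n2"
    and lt: "n1 < n2"
    and consec: "\<And>m. n1 < m \<Longrightarrow> m < n2 \<Longrightarrow> \<not> switch_point f E \<theta> m"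
  shows "\<exists>n. E dvd n \<and> n1 \<le> n \<and> n \<le> n2 - E \<and>
             (tta_L f E \<theta> n = OE_ceil Opt E n \<or> tta_L f E \<theta> n = OE_floor Opt E n)"
proof -
  have Opt_pos: "\<And>t. 1 \<le> t \<Longrightarrow> 0 < Opt t" using Opt_min by fastforce
  interpret tta_assumptions f E \<theta> Opt
    by unfold_locales (use E_pos Opt_pos A1 A2 A4 in auto)
  obtain c where c: "n2 - n1 = c * E"
    using dvd_diff_nat[OF switch_point_dvd[OF sw2] switch_point_dvd[OF sw1]]
    by (metis dvdE mult.commute)
  then obtain K where "c = Suc K" using lt by (cases c) auto
  then have n2: "n2 = n1 + Suc K * E" using c lt by simp
  have "\<exists>i\<le>K. tta_L f E \<theta> (n1 + i * E) \<in> {OE_ceil Opt E (n1 + i * E), OE_floor Opt E (n1 + i * E)}"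
  proof (rule tta_L_hits_OE_between_switch_points[OF sw1])
    show "switch_point f E \<theta> (n1 + Suc K * E)" using sw2 n2 by simp
    show "\<not> switch_point f E \<theta> j" if "n1 < j" "j \<le> n1 + K * E" for j
      using that consec n2 E_pos by simp
  qed
  then obtain i where i: "i \<le> K"
    and hit: "tta_L f E \<theta> (n1 + i * E) \<in> {OE_ceil Opt E (n1 + i * E), OE_floor Opt E (n1 + i * E)}"
    by blast
  have "E dvd n1 + i * E" "n1 \<le> n1 + i * E" "n1 + i * E \<le> n2 - E"
    using switch_point_dvd[OF sw1] i n2 by simp_all
  with hit show ?thesis by blast
qed

end
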